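(* Let $A$ be a race-free game and $\delta_A:D_A\to A^\perp\parallel A\parallel A$ the duplication map defined in the context. Then $D_A$ is deterministic (i.e. $\delta_A$ is a deterministic edc strategy) iff no two Opponent moves of $A$ are in immediate conflict: whenever $x$ is a configuration of $A$ and $a_1,a_2\notin x$ with $\mathrm{pol}_A(a_1)=\mathrm{pol}_A(a_2)=-$ and $x\cup\{a_1\}$, $x\cup\{a_2\}$ configurations, $x\cup\{a_1,a_2\}$ is a configuration of $A$.
   Context: A game $A$ is a prime event structure $(A,\le,\mathrm{Con})$ (partial order with finite down-sets; nonempty subset-closed family of finite consistent sets containing singletons with $X\in\mathrm{Con}$, $e\le e'\in X\Rightarrow X\cup\{e\}\in\mathrm{Con}$) with a polarity function $\mathrm{pol}_A:A\to\{+,-\}$; configurations are down-closed sets with all finite subsets consistent. It is race-free if $x\cup\{a\}$, $x\cup\{a'\}$ configurations with $a,a'$ of opposite polarity imply $x\cup\{a,a'\}$ is a configuration. $A^\perp$ reverses polarity. $A^\perp\parallel A\parallel A$ has events $(\{0\}\times A)\cup(\{1\}\times A)\cup(\{2\}\times A)$ with componentwise order, consistency (finite set consistent iff each component part is), and polarity (component 0 reversed). Duplication: a triple $(x,y_1,y_2)$ with $x$ a finite configuration of $A^\perp$ and $y_1,y_2$ finite configurations of $A$ is balanced if every $a\in y_1\cup y_2$ with $\mathrm{pol}_A(a)=+$ lies in $x$, and every $a\in x$ with $\mathrm{pol}_{A^\perp}(a)=+$ lies in $y_1$ or $y_2$. A choice function is $\chi:x^+\to\{1,2\}$ ($x^+$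 the events of $x$ positive in $A^\perp$) with $\chi(a)=i\Rightarrow a\in y_i$. The order $q(x,y_1,y_2;\chi)$ has underlying set $(\{0\}\times x)\cup(\{1\}\times y_1)\cup(\{2\}\times y_2)$ and the partial order generated by the order inherited from $A^\perp\parallel A\parallel A$ together with $(0,a)\le(i,a)$ for $a\in y_i$ with $\mathrm{pol}_A(a)=+$ ($i=1,2$), and $(\chi(a),a)\le(0,a)$ for $a\in x$ with $\mathrm{pol}_{A^\perp}(a)=+$. The edc $D_A$ has as events all such $q(x,y_1,y_2;\chi)$ possessing a top element, and $\delta_A(d)$ is the top element of $d$; $d\le d'$ iff the underlying set of $d$ is a down-closed subset of that of $d'$ and the order of $d$ is the restriction of that of $d'$; a finite $X\subseteq D_A$ is consistent iff $\delta_A$ of its down-closure is consistent in $A^\perp\parallel A\parallel A$; $d\equiv d'$ iff $\delta_A(d)=\delta_A(d')$; $\mathrm{pol}(d)$ is the polarity of $\delta_A(d)$. An edc with polarity $S$ (and any strategy with domain $S$) is deterministic if for every finite $X\subseteq S$, consistency of the set of negative events of the down-closure $[X]$ implies $X$ is consistent. *)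

theory Defs
  imports Main
begin

text \<open>Games: prime event structures with polarity. Polarity True means +, False means -.\<close>

record 'a game =
  evs :: "'a set"
  leq :: "'a \<Rightarrow> 'a \<Rightarrow> bool"
  con :: "'a set set"
  pol :: "'a \<Rightarrow> bool"

definition is_game :: "'a game \<Rightarrow> bool" where
  "is_game A \<longleftrightarrow>
     (\<forall>e e'. leq A e e' \<longrightarrow> e \<in> evs A \<and> e' \<in> evs A) \<and>
     (\<forall>e\<in>evs A. leq A e e) \<and>
     (\<forall>e e'. leq A e e' \<and> leq A e' e \<longrightarrow> e = e') \<and>
     (\<forall>e e' e''. leq A e e' \<and> leq A e' e'' \<longrightarrow> leq A e e'') \<and>
     (\<forall>e\<in>evs A. finite {e'. leq A e' e}) \<and>
     (\<forall>X\<in>con A. finite X \<and> X \<subseteq> evs A) \<and>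
     con A \<noteq> {} \<and>
     (\<forall>X Y. X \<in> con A \<and> Y \<subseteq> X \<longrightarrow> Y \<in> con A) \<and>
     (\<forall>e\<in>evs A. {e} \<in> con A) \<and>
     (\<forall>X e e'. X \<in> con A \<and> e' \<in> X \<and> leq A e e' \<longrightarrow> insert e X \<in> con A)"

definition config :: "'a game \<Rightarrow> 'a set \<Rightarrow> bool" where
  "config A x \<longleftrightarrow> x \<subseteq> evs A \<and>
     (\<forall>e\<in>x. \<forall>e'\<in>evs A. leq A e' e \<longrightarrow> e' \<in> x) \<and>
     (\<forall>X. X \<subseteq> x \<and> finite X \<longrightarrow> X \<in> con A)"

definition race_free :: "'a game \<Rightarrow> bool" where
  "race_free A \<longleftrightarrow> (\<forall>x a a'. config A x \<and> config A (insert a x) \<and> config A (insert a' x)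
      \<and> a \<in> evs A \<and> a' \<in> evs A \<and> pol A a \<noteq> pol A a' \<longrightarrow> config A (insert a (insert a' x)))"

definition no_neg_conflict :: "'a game \<Rightarrow> bool" where
  "no_neg_conflict A \<longleftrightarrow> (\<forall>x a1 a2. config A x \<and> a1 \<notin> x \<and> a2 \<notin> x \<and>
      \<not> pol A a1 \<and> \<not> pol A a2 \<and> config A (insert a1 x) \<and> config A (insert a2 x)
      \<longrightarrow> config A (insert a1 (insert a2 x)))"

text \<open>The game A^perp || A || A, on events (i,a) with i in {0,1,2}. Configurations of
  A^perp coincide with those of A; only polarity is reversed.\<close>

definition par_evs :: "'a game \<Rightarrow> (nat \<times> 'a) set" where
  "par_evs A = {0,1,2} \<times> evs A"

definition par_pol :: "'a game \<Rightarrow> nat \<times> 'a \<Rightarrow> bool" where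
  "par_pol A p = (if fst p = 0 then \<not> pol A (snd p) else pol A (snd p))"

definition par_con :: "'a game \<Rightarrow> (nat \<times> 'a) set \<Rightarrow> bool" where
  "par_con A Z \<longleftrightarrow> finite Z \<and> Z \<subseteq> par_evs A \<and>
     (\<forall>i\<in>{0,1,2}. {a. (i, a) \<in> Z} \<in> con A)"

definition balanced :: "'a game \<Rightarrow> 'a set \<Rightarrow> 'a set \<Rightarrow> 'a set \<Rightarrow> bool" where
  "balanced A x y1 y2 \<longleftrightarrow> finite x \<and> finite y1 \<and> finite y2 \<and>
     config A x \<and> config A y1 \<and> config A y2 \<and>
     (\<forall>a\<in>y1 \<union> y2. pol A a \<longrightarrow> a \<in> x) \<and>
     (\<forall>a\<in>x. \<not> pol A a \<longrightarrow> a \<in> y1 \<or> a \<in> y2)"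

text \<open>Choice function on x^+ (events of x positive in A^perp, i.e. negative in A).\<close>
definition choice :: "'a game \<Rightarrow> 'a set \<Rightarrow> 'a set \<Rightarrow> 'a set \<Rightarrow> ('a \<Rightarrow> nat) \<Rightarrow> bool" where
  "choice A x y1 y2 \<chi> \<longleftrightarrow> (\<forall>a\<in>x. \<not> pol A a \<longrightarrow>
     (\<chi> a = 1 \<and> a \<in> y1) \<or> (\<chi> a = 2 \<and> a \<in> y2))"

definition qset :: "'a set \<Rightarrow> 'a set \<Rightarrow> 'a set \<Rightarrow> (nat \<times> 'a) set" where
  "qset x y1 y2 = ({0} \<times> x) \<union> ({1} \<times> y1) \<union> ({2} \<times> y2)"

definition qbase :: "'a game \<Rightarrow> 'a set \<Rightarrow> 'a set \<Rightarrow> 'a set \<Rightarrow> ('a \<Rightarrow> nat)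
    \<Rightarrow> ((nat \<times> 'a) \<times> (nat \<times> 'a)) set" where
  "qbase A x y1 y2 \<chi> = {(p, p'). p \<in> qset x y1 y2 \<and> p' \<in> qset x y1 y2 \<and>
      ((fst p = fst p' \<and> leq A (snd p) (snd p')) \<or>
       (\<exists>a. p = (0, a) \<and> p' = (1, a) \<and> a \<in> y1 \<and> pol A a) \<or>
       (\<exists>a. p = (0, a) \<and> p' = (2, a) \<and> a \<in> y2 \<and> pol A a) \<or>
       (\<exists>a\<in>x. \<not> pol A a \<and> p = (\<chi> a, a) \<and> p' = (0, a)))}"

definition qord :: "'a game \<Rightarrow> 'a set \<Rightarrow> 'a set \<Rightarrow> 'a set \<Rightarrow> ('a \<Rightarrow> nat)
    \<Rightarrow> ((nat \<times> 'a) \<times> (nat \<times> 'a)) set" where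
  "qord A x y1 y2 \<chi> = Id_on (qset x y1 y2) \<union> (qbase A x y1 y2 \<chi>)\<^sup>+"

type_synonym 'a dev = "(nat \<times> 'a) set \<times> ((nat \<times> 'a) \<times> (nat \<times> 'a)) set"

definition has_top :: "'a dev \<Rightarrow> bool" where
  "has_top d \<longleftrightarrow> (\<exists>t\<in>fst d. \<forall>s\<in>fst d. (s, t) \<in> snd d)"

definition D_ev :: "'a game \<Rightarrow> 'a dev set" where
  "D_ev A = {d. \<exists>x y1 y2 \<chi>. balanced A x y1 y2 \<and> choice A x y1 y2 \<chi> \<and>
      d = (qset x y1 y2, qord A x y1 y2 \<chi>) \<and> has_top d}"

definition delta :: "'a dev \<Rightarrow> nat \<times> 'a" where
  "delta d = (THE t. t \<in> fst d \<and> (\<forall>s\<in>fst d. (s, t) \<in> snd d))"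

definition D_le :: "'a dev \<Rightarrow> 'a dev \<Rightarrow> bool" where
  "D_le d d' \<longleftrightarrow> fst d \<subseteq> fst d' \<and>
     (\<forall>t\<in>fst d. \<forall>s\<in>fst d'. (s, t) \<in> snd d' \<longrightarrow> s \<in> fst d) \<and>
     snd d = snd d' \<inter> (fst d \<times> fst d)"

definition D_down :: "'a game \<Rightarrow> 'a dev set \<Rightarrow> 'a dev set" where
  "D_down A X = {d \<in> D_ev A. \<exists>d'\<in>X. D_le d d'}"

definition D_con :: "'a game \<Rightarrow> 'a dev set \<Rightarrow> bool" where
  "D_con A X \<longleftrightarrow> finite X \<and> X \<subseteq> D_ev A \<and> par_con A (delta ` D_down A X)"

definition D_pol :: "'a game \<Rightarrow> 'a dev \<Rightarrow> bool" where
  "D_pol A d = par_pol A (delta d)"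

definition D_deterministic :: "'a game \<Rightarrow> bool" where
  "D_deterministic A \<longleftrightarrow> (\<forall>X. finite X \<and> X \<subseteq> D_ev A \<longrightarrow>
      D_con A {d \<in> D_down A X. \<not> D_pol A d} \<longrightarrow> D_con A X)"

end

theory Submission
  imports Defs
begin

text \<open>The negative events of D_A are those whose top is a copy (0, a) of an event a positive in A,
  or a copy (i, a), i = 1, 2, of an event a negative in A.

  Suppose Opponent moves never conflict and the negative part of a finite X \<subseteq> D_A is consistent.
  Every event a positive in A whose copy (0, a) occurs in X is the top of a negative event of D_A
  below X, so these events form a consistent set P. By balance, every event positive in A occurring
  in any copy of X lies in P. Configurations whose positive events lie in the down-closure of P can
  be added to it one event at a time, using race-freeness and the absence of negative conflicts;
  hence all three copies of X lie in a single configuration of A.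

  Conversely, let a1, a2 be negative events, each compatible with z but not jointly. Take an
  inconsistent finite W \<subseteq> z \<union> {a1, a2} and for each e \<in> W the event of D_A with top (0, e) whose
  negative events below e are taken from copy 1 if e \<in> z \<union> {a1} and from copy 2 otherwise. The
  negative part of the set of these events lives over z, z \<union> {a1} and z \<union> {a2}, so it is
  consistent, whereas their tops form W in A^perp.\<close>

lemma game_leq_in_evs: "is_game A \<Longrightarrow> leq A e e' \<Longrightarrow> e \<in> evs A \<and> e' \<in> evs A"
  unfolding is_game_def by metis

lemma game_leq_refl: "is_game A \<Longrightarrow> e \<in> evs A \<Longrightarrow> leq A e e"
  unfolding is_game_def by metis

lemma game_leq_antisym: "is_game A \<Longrightarrow> leq A e e' \<Longrightarrow> leq A e' e \<Longrightarrow> e = e'"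
  unfolding is_game_def by metis

lemma game_leq_trans: "is_game A \<Longrightarrow> leq A e e' \<Longrightarrow> leq A e' e'' \<Longrightarrow> leq A e e''"
  unfolding is_game_def by metis

lemma game_finite_below: "is_game A \<Longrightarrow> e \<in> evs A \<Longrightarrow> finite {e'. leq A e' e}"
  unfolding is_game_def by metis

lemma game_con_finite: "is_game A \<Longrightarrow> X \<in> con A \<Longrightarrow> finite X \<and> X \<subseteq> evs A"
  unfolding is_game_def by metis

lemma game_con_subset: "is_game A \<Longrightarrow> X \<in> con A \<Longrightarrow> Y \<subseteq> X \<Longrightarrow> Y \<in> con A"
  unfolding is_game_def by metis

lemma game_con_empty: "is_game A \<Longrightarrow> {} \<in> con A"
  unfolding is_game_def by (metis all_not_in_conv empty_subsetI)

lemma game_con_singleton: "is_game A \<Longrightarrow> e \<in> evs A \<Longrightarrow> {e} \<in> con A"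
  unfolding is_game_def by metis

lemma game_con_insert_below:
  "is_game A \<Longrightarrow> X \<in> con A \<Longrightarrow> e' \<in> X \<Longrightarrow> leq A e e' \<Longrightarrow> insert e X \<in> con A"
  unfolding is_game_def by metis

lemma game_finite_has_minimal:
  assumes A: "is_game A" and "finite S" "S \<noteq> {}"
  obtains m where "m \<in> S" "\<And>e. e \<in> S \<Longrightarrow> leq A e m \<Longrightarrow> e = m"
proof -
  have "\<exists>m\<in>S. \<forall>e\<in>S. leq A e m \<longrightarrow> e = m"
    using assms(2,3)
  proof (induction S rule: finite_ne_induct)
    case (insert x F)
    then obtain m where m: "m \<in> F" "\<forall>e\<in>F. leq A e m \<longrightarrow> e = m" by blast
    show ?case
    proof (cases "leq A x m")
      case True
      have "e = x" if "e \<in> insert x F" "leq A e x" for e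
        using that m True game_leq_trans[OF A, of e x m] game_leq_antisym[OF A, of x m] by auto
      then show ?thesis by blast
    next
      case False
      then show ?thesis using m by auto
    qed
  qed simp
  then show thesis using that by blast
qed

lemma config_subset_evs: "config A x \<Longrightarrow> x \<subseteq> evs A"
  unfolding config_def by simp

lemma config_down_closed: "is_game A \<Longrightarrow> config A x \<Longrightarrow> e \<in> x \<Longrightarrow> leq A e' e \<Longrightarrow> e' \<in> x"
  unfolding config_def by (metis game_leq_in_evs)

lemma config_finite_subset_con: "config A x \<Longrightarrow> X \<subseteq> x \<Longrightarrow> finite X \<Longrightarrow> X \<in> con A"
  unfolding config_def by simp

lemma configI:
  "x \<subseteq> evs A \<Longrightarrow> (\<And>e e'. e \<in> x \<Longrightarrow> leq A e' e \<Longrightarrow> e' \<in> x) \<Longrightarrow>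
    (\<And>X. X \<subseteq> x \<Longrightarrow> finite X \<Longrightarrow> X \<in> con A) \<Longrightarrow> config A x"
  unfolding config_def by simp

lemma config_empty: "is_game A \<Longrightarrow> config A {}"
  unfolding config_def using game_con_empty by auto

lemma config_subset_down_closed:
  assumes A: "is_game A" and x: "config A x" and "y \<subseteq> x"
    and closed: "\<And>e e'. e \<in> y \<Longrightarrow> e' \<in> x \<Longrightarrow> leq A e' e \<Longrightarrow> e' \<in> y"
  shows "config A y"
proof (rule configI)
  show "y \<subseteq> evs A" using \<open>y \<subseteq> x\<close> config_subset_evs[OF x] by blast
  show "e' \<in> y" if "e \<in> y" "leq A e' e" for e e'
    using that closed config_down_closed[OF A x] \<open>y \<subseteq> x\<close> by blast
  show "X \<in> con A" if "X \<subseteq> y" "finite X" for X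
    using that config_finite_subset_con[OF x] \<open>y \<subseteq> x\<close> by blast
qed

lemma config_Int: "is_game A \<Longrightarrow> config A x \<Longrightarrow> config A y \<Longrightarrow> config A (x \<inter> y)"
  by (rule config_subset_down_closed[of A x]) (auto dest: config_down_closed[of A y])

lemma config_insert_minimal:
  assumes A: "is_game A" and u: "config A u" and v: "config A v" and "u \<subseteq> v" "f \<in> v"
    and min: "\<And>e. e \<in> v - u \<Longrightarrow> leq A e f \<Longrightarrow> e = f"
  shows "config A (insert f u)"
proof (rule config_subset_down_closed[OF A v])
  show "insert f u \<subseteq> v" using \<open>u \<subseteq> v\<close> \<open>f \<in> v\<close> by blast
  show "e' \<in> insert f u" if "e \<in> insert f u" "e' \<in> v" "leq A e' e" for e e'
    using that min config_down_closed[OF A u] by blast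
qed

lemma config_Un_iff_con:
  assumes A: "is_game A" and x: "config A x" and y: "config A y"
  shows "config A (x \<union> y) \<longleftrightarrow> (\<forall>X. X \<subseteq> x \<union> y \<longrightarrow> finite X \<longrightarrow> X \<in> con A)"
proof
  show "config A (x \<union> y) \<Longrightarrow> \<forall>X. X \<subseteq> x \<union> y \<longrightarrow> finite X \<longrightarrow> X \<in> con A"
    using config_finite_subset_con by blast
  show "config A (x \<union> y)" if "\<forall>X. X \<subseteq> x \<union> y \<longrightarrow> finite X \<longrightarrow> X \<in> con A"
  proof (rule configI)
    show "x \<union> y \<subseteq> evs A" using config_subset_evs[OF x] config_subset_evs[OF y] by blast
    show "e' \<in> x \<union> y" if "e \<in> x \<union> y" "leq A e' e" for e e'
      using that config_down_closed[OF A x] config_down_closed[OF A y] by blast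
  qed (use that in blast)
qed

definition down_closure :: "'a game \<Rightarrow> 'a set \<Rightarrow> 'a set" where
  "down_closure A P = {e. \<exists>f\<in>P. leq A e f}"

lemma down_closure_subset:
  assumes A: "is_game A" and x: "config A x" and "P \<subseteq> x"
  shows "down_closure A P \<subseteq> x"
  using assms(3) config_down_closed[OF A x] unfolding down_closure_def by blast

lemma down_closure_con:
  assumes A: "is_game A" and P: "P \<in> con A"
  shows "down_closure A P \<in> con A"
proof -
  have "finite P" "P \<subseteq> evs A" using game_con_finite[OF A P] by auto
  then have "finite (\<Union>f\<in>P. {e. leq A e f})" using game_finite_below[OF A] by blast
  then have fin: "finite (down_closure A P)"
    by (rule finite_subset[rotated]) (auto simp: down_closure_def)
  have "S \<union> P \<in> con A" if "finite S" "S \<subseteq> down_closure A P" for S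
    using that
  proof (induction S rule: finite_induct)
    case (insert e S)
    then obtain f where "f \<in> P" "leq A e f" unfolding down_closure_def by blast
    with insert show ?case using game_con_insert_below[OF A, of "S \<union> P" f e] by auto
  qed (simp add: P)
  then show ?thesis using fin game_con_subset[OF A] by blast
qed

lemma config_down_closure:
  assumes A: "is_game A" and P: "P \<in> con A"
  shows "config A (down_closure A P)"
proof (rule configI)
  show "down_closure A P \<subseteq> evs A"
    unfolding down_closure_def using game_leq_in_evs[OF A] by blast
  show "e' \<in> down_closure A P" if "e \<in> down_closure A P" "leq A e' e" for e e'
    using that game_leq_trans[OF A] unfolding down_closure_def by blast
  show "X \<in> con A" if "X \<subseteq> down_closure A P" for X
    using game_con_subset[OF A down_closure_con[OF A P] that] .
qed

subsection \<open>Adding negative events\<close>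

lemma race_freeD:
  "race_free A \<Longrightarrow> config A x \<Longrightarrow> config A (insert a x) \<Longrightarrow> config A (insert a' x) \<Longrightarrow>
    a \<in> evs A \<Longrightarrow> a' \<in> evs A \<Longrightarrow> pol A a \<noteq> pol A a' \<Longrightarrow> config A (insert a (insert a' x))"
  unfolding race_free_def by blast

lemma no_neg_conflictD:
  "no_neg_conflict A \<Longrightarrow> config A x \<Longrightarrow> a1 \<notin> x \<Longrightarrow> a2 \<notin> x \<Longrightarrow> \<not> pol A a1 \<Longrightarrow> \<not> pol A a2 \<Longrightarrow>
    config A (insert a1 x) \<Longrightarrow> config A (insert a2 x) \<Longrightarrow> config A (insert a1 (insert a2 x))"
  unfolding no_neg_conflict_def by blast

text \<open>Add the events of v - u one at a time, minimal ones first; each such event f commutes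
  with e by race-freeness if f is positive and by the absence of negative conflicts otherwise.\<close>

lemma config_insert_neg_propagate:
  assumes A: "is_game A" and rf: "race_free A" and nc: "no_neg_conflict A"
  shows "finite (v - u) \<Longrightarrow> config A u \<Longrightarrow> config A v \<Longrightarrow> u \<subseteq> v \<Longrightarrow> config A (insert e u)
    \<Longrightarrow> \<not> pol A e \<Longrightarrow> config A (insert e v)"
proof (induction "card (v - u)" arbitrary: u rule: less_induct)
  case less
  note fin = less.prems(1) and u = less.prems(2) and v = less.prems(3) and uv = less.prems(4)
    and eu = less.prems(5) and neg = less.prems(6)
  show ?case
  proof (cases "v - u = {}")
    case True
    then have "v = u" using uv by blast
    then show ?thesis using eu by simp
  next
    case ne: False
    obtain f where f: "f \<in> v - u" and min: "\<And>g. g \<in> v - u \<Longrightarrow> leq A g f \<Longrightarrow> g = f"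
      using game_finite_has_minimal[OF A fin ne] by blast
    have uf: "config A (insert f u)"
      using config_insert_minimal[OF A u v uv _ min] f by blast
    have euf: "config A (insert e (insert f u))"
    proof (cases "e \<in> insert f u")
      case True
      then show ?thesis using uf by (simp add: insert_absorb)
    next
      case e: False
      show ?thesis
      proof (cases "pol A f")
        case True
        have "e \<in> evs A" "f \<in> evs A"
          using config_subset_evs[OF eu] config_subset_evs[OF v] f by auto
        then show ?thesis using race_freeD[OF rf u eu uf] True neg by simp
      next
        case False
        then show ?thesis using no_neg_conflictD[OF nc u _ _ neg False eu uf] e f by blast
      qed
    qed
    have diff: "v - insert f u = (v - u) - {f}" by blast
    have "card (v - insert f u) < card (v - u)"
      unfolding diff using f fin by (rule card_Diff1_less[rotated])
    moreover have "finite (v - insert f u)" unfolding diff using fin by simp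
    moreover have "insert f u \<subseteq> v" using f uv by blast
    ultimately show ?thesis using less.hyps[OF _ _ uf v _ euf neg] by blast
  qed
qed

lemma config_Un_neg:
  assumes A: "is_game A" and rf: "race_free A" and nc: "no_neg_conflict A"
  shows "finite x \<Longrightarrow> finite y \<Longrightarrow> config A x \<Longrightarrow> config A y \<Longrightarrow> \<forall>a\<in>y - x. \<not> pol A a
    \<Longrightarrow> config A (x \<union> y)"
proof (induction "card (y - x)" arbitrary: x rule: less_induct)
  case less
  note fx = less.prems(1) and fy = less.prems(2) and x = less.prems(3) and y = less.prems(4)
    and neg = less.prems(5)
  show ?case
  proof (cases "y - x = {}")
    case True
    then show ?thesis using x by (simp add: Un_absorb2)
  next
    case False
    obtain f where f: "f \<in> y - x" and min: "\<And>g. g \<in> y - x \<Longrightarrow> leq A g f \<Longrightarrow> g = f"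
      using game_finite_has_minimal[OF A _ False] fy by blast
    have xy: "config A (x \<inter> y)" using config_Int[OF A x y] .
    have "config A (insert f (x \<inter> y))"
      using config_insert_minimal[OF A xy y _ _ min] f by blast
    then have xf: "config A (insert f x)"
      using config_insert_neg_propagate[OF A rf nc _ xy x] fx f neg by blast
    have diff: "y - insert f x = (y - x) - {f}" by blast
    have "card (y - insert f x) < card (y - x)"
      unfolding diff using f fy by (intro card_Diff1_less) auto
    moreover have "\<forall>a\<in>y - insert f x. \<not> pol A a" using neg by blast
    ultimately have "config A (insert f x \<union> y)"
      using less.hyps[OF _ _ fy xf y] fx by simp
    moreover have "insert f x \<union> y = x \<union> y" using f by blast
    ultimately show ?thesis by simp
  qed
qed

lemma config_Un_family_neg:
  assumes A: "is_game A" and rf: "race_free A" and nc: "no_neg_conflict A"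
  shows "finite F \<Longrightarrow> \<forall>y\<in>F. finite y \<and> config A y \<Longrightarrow> finite p \<Longrightarrow> config A p
    \<Longrightarrow> \<forall>y\<in>F. \<forall>a\<in>y. pol A a \<longrightarrow> a \<in> p \<Longrightarrow> config A (p \<union> \<Union>F)"
proof (induction F rule: finite_induct)
  case (insert y F)
  then have "config A ((p \<union> \<Union>F) \<union> y)"
    by (intro config_Un_neg[OF A rf nc, of "p \<union> \<Union>F" y]) auto
  then show ?case by (simp add: Un_ac)
qed simp

subsection \<open>The order of a duplication triple\<close>

lemma qbase_subset: "qbase A x y1 y2 \<chi> \<subseteq> qset x y1 y2 \<times> qset x y1 y2"
  unfolding qbase_def by auto

lemma qord_subset: "qord A x y1 y2 \<chi> \<subseteq> qset x y1 y2 \<times> qset x y1 y2"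
proof -
  have "(qbase A x y1 y2 \<chi>)\<^sup>+ \<subseteq> qset x y1 y2 \<times> qset x y1 y2"
    by (rule trancl_subset_Sigma[OF qbase_subset])
  then show ?thesis unfolding qord_def by auto
qed

lemma qord_refl: "p \<in> qset x y1 y2 \<Longrightarrow> (p, p) \<in> qord A x y1 y2 \<chi>"
  unfolding qord_def by auto

lemma qord_trans:
  "(p, q) \<in> qord A x y1 y2 \<chi> \<Longrightarrow> (q, r) \<in> qord A x y1 y2 \<chi> \<Longrightarrow> (p, r) \<in> qord A x y1 y2 \<chi>"
  unfolding qord_def by (auto simp: Id_on_def intro: trancl_trans)

lemma qbase_in_qord: "(p, q) \<in> qbase A x y1 y2 \<chi> \<Longrightarrow> (p, q) \<in> qord A x y1 y2 \<chi>"
  unfolding qord_def by auto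

lemma qbase_leq:
  assumes A: "is_game A" and evs: "x \<union> y1 \<union> y2 \<subseteq> evs A" and pq: "(p, q) \<in> qbase A x y1 y2 \<chi>"
  shows "leq A (snd p) (snd q)"
proof -
  have "q \<in> qset x y1 y2" using pq qbase_subset[of A x y1 y2 \<chi>] by blast
  then have "snd q \<in> evs A" using evs unfolding qset_def by auto
  moreover have "leq A (snd p) (snd q) \<or> snd p = snd q" using pq unfolding qbase_def by auto
  ultimately show ?thesis using game_leq_refl[OF A] by auto
qed

lemma qord_leq:
  assumes A: "is_game A" and evs: "x \<union> y1 \<union> y2 \<subseteq> evs A" and pq: "(p, q) \<in> qord A x y1 y2 \<chi>"
  shows "leq A (snd p) (snd q)"
proof (cases "p = q")
  case True
  have "p \<in> qset x y1 y2" using pq qord_subset[of A x y1 y2 \<chi>] by blast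
  then have "snd p \<in> evs A" using evs unfolding qset_def by auto
  then show ?thesis using True game_leq_refl[OF A] by simp
next
  case False
  then have "(p, q) \<in> (qbase A x y1 y2 \<chi>)\<^sup>+" using pq unfolding qord_def by (auto simp: Id_on_def)
  then show ?thesis
  proof (induction rule: trancl_induct)
    case (base q)
    then show ?case by (rule qbase_leq[OF A evs])
  next
    case (step r q)
    then show ?case using game_leq_trans[OF A step.IH qbase_leq[OF A evs step.hyps(2)]] by simp
  qed
qed

lemma qbase_same_event:
  "(p, q) \<in> qbase A x y1 y2 \<chi> \<Longrightarrow> snd p = snd q \<Longrightarrow>
    p = q \<or> (pol A (snd p) \<and> fst p = 0) \<or> (\<not> pol A (snd p) \<and> fst q = 0)"
  unfolding qbase_def by (auto simp: prod_eq_iff)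

lemma qord_same_event:
  assumes A: "is_game A" and evs: "x \<union> y1 \<union> y2 \<subseteq> evs A"
    and pq: "(p, q) \<in> qord A x y1 y2 \<chi>" and same: "snd p = snd q"
  shows "p = q \<or> (pol A (snd p) \<and> fst p = 0) \<or> (\<not> pol A (snd p) \<and> fst q = 0)"
proof (cases "p = q")
  case False
  then have "(p, q) \<in> (qbase A x y1 y2 \<chi>)\<^sup>+" using pq unfolding qord_def by (auto simp: Id_on_def)
  then show ?thesis
    using same
  proof (induction rule: trancl_induct)
    case (base q)
    then show ?case by (rule qbase_same_event)
  next
    case (step r q)
    have "(p, r) \<in> qord A x y1 y2 \<chi>" using step.hyps(1) unfolding qord_def by simp
    then have "leq A (snd q) (snd r)" using qord_leq[OF A evs] step.prems by metis
    moreover have "leq A (snd r) (snd q)" using qbase_leq[OF A evs step.hyps(2)] .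
    ultimately have "snd r = snd q" by (rule game_leq_antisym[OF A, rotated])
    then show ?case using step.IH qbase_same_event[OF step.hyps(2)] step.prems by auto
  qed
qed simp

lemma qord_antisym:
  assumes A: "is_game A" and evs: "x \<union> y1 \<union> y2 \<subseteq> evs A"
    and "(p, q) \<in> qord A x y1 y2 \<chi>" "(q, p) \<in> qord A x y1 y2 \<chi>"
  shows "p = q"
proof -
  have same: "snd p = snd q"
    using game_leq_antisym[OF A qord_leq[OF A evs assms(3)] qord_leq[OF A evs assms(4)]] .
  show ?thesis
    using qord_same_event[OF A evs assms(3) same] qord_same_event[OF A evs assms(4) same[symmetric]]
      same
    by (auto simp: prod_eq_iff)
qed

lemma delta_qord_top:
  assumes A: "is_game A" and evs: "x \<union> y1 \<union> y2 \<subseteq> evs A" and t: "t \<in> qset x y1 y2"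
    and top: "\<forall>s\<in>qset x y1 y2. (s, t) \<in> qord A x y1 y2 \<chi>"
  shows "delta (qset x y1 y2, qord A x y1 y2 \<chi>) = t"
  unfolding delta_def fst_conv snd_conv
proof (rule the_equality)
  show "t \<in> qset x y1 y2 \<and> (\<forall>s\<in>qset x y1 y2. (s, t) \<in> qord A x y1 y2 \<chi>)" using t top by blast
  fix t' assume "t' \<in> qset x y1 y2 \<and> (\<forall>s\<in>qset x y1 y2. (s, t') \<in> qord A x y1 y2 \<chi>)"
  then show "t' = t" using t top qord_antisym[OF A evs, of t t' \<chi>] by blast
qed

definition component :: "nat \<Rightarrow> (nat \<times> 'a) set \<Rightarrow> 'a set" where
  "component i Z = {a. (i, a) \<in> Z}"

lemma component_qset [simp]:
  "component 0 (qset x y1 y2) = x" "component 1 (qset x y1 y2) = y1"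
  "component (Suc 0) (qset x y1 y2) = y1" "component 2 (qset x y1 y2) = y2"
  unfolding component_def qset_def by auto

lemma qset_components:
  assumes "S \<subseteq> qset x y1 y2"
  shows "qset (component 0 S) (component 1 S) (component 2 S) = S"
  using assms unfolding qset_def component_def by auto

lemma balanced_subset_evs: "balanced A x y1 y2 \<Longrightarrow> x \<union> y1 \<union> y2 \<subseteq> evs A"
  using config_subset_evs[of A x] config_subset_evs[of A y1] config_subset_evs[of A y2]
  unfolding balanced_def by simp

lemma D_evE:
  assumes "d \<in> D_ev A"
  obtains x y1 y2 \<chi> where "balanced A x y1 y2" "choice A x y1 y2 \<chi>"
    "d = (qset x y1 y2, qord A x y1 y2 \<chi>)" "has_top d"
  using assms unfolding D_ev_def by blast

lemma D_evI:
  assumes "balanced A x y1 y2" "choice A x y1 y2 \<chi>" "t \<in> qset x y1 y2"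
    "\<forall>s\<in>qset x y1 y2. (s, t) \<in> qord A x y1 y2 \<chi>"
  shows "(qset x y1 y2, qord A x y1 y2 \<chi>) \<in> D_ev A"
  unfolding D_ev_def mem_Collect_eq has_top_def
  by (rule exI[of _ x], rule exI[of _ y1], rule exI[of _ y2], rule exI[of _ \<chi>]) (use assms in auto)

lemma D_ev_delta:
  assumes A: "is_game A" and d: "d \<in> D_ev A"
  shows "delta d \<in> fst d" "s \<in> fst d \<Longrightarrow> (s, delta d) \<in> snd d"
proof -
  obtain x y1 y2 \<chi> where b: "balanced A x y1 y2" and "choice A x y1 y2 \<chi>"
    and d_eq: "d = (qset x y1 y2, qord A x y1 y2 \<chi>)" and top: "has_top d"
    by (rule D_evE[OF d])
  obtain t where t: "t \<in> qset x y1 y2" "\<forall>s\<in>qset x y1 y2. (s, t) \<in> qord A x y1 y2 \<chi>"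
    using top unfolding has_top_def d_eq fst_conv snd_conv by blast
  have "delta d = t" unfolding d_eq by (rule delta_qord_top[OF A balanced_subset_evs[OF b] t])
  with t show "delta d \<in> fst d" "s \<in> fst d \<Longrightarrow> (s, delta d) \<in> snd d"
    unfolding d_eq fst_conv snd_conv by blast+
qed

lemma D_ev_leq:
  assumes A: "is_game A" and d: "d \<in> D_ev A" and st: "(s, t) \<in> snd d"
  shows "leq A (snd s) (snd t)"
proof -
  obtain x y1 y2 \<chi> where "balanced A x y1 y2" "choice A x y1 y2 \<chi>"
    "d = (qset x y1 y2, qord A x y1 y2 \<chi>)" "has_top d"
    by (rule D_evE[OF d])
  then show ?thesis using qord_leq[OF A balanced_subset_evs] st by auto
qed

lemma D_ev_events:
  assumes d: "d \<in> D_ev A"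
  shows "finite (fst d)" "fst d \<subseteq> {0, 1, 2} \<times> evs A"
proof -
  obtain x y1 y2 \<chi> where b: "balanced A x y1 y2" and "choice A x y1 y2 \<chi>"
    and d_eq: "d = (qset x y1 y2, qord A x y1 y2 \<chi>)" and "has_top d"
    by (rule D_evE[OF d])
  show "finite (fst d)" using b d_eq unfolding balanced_def qset_def by auto
  show "fst d \<subseteq> {0, 1, 2} \<times> evs A" using balanced_subset_evs[OF b] d_eq unfolding qset_def by auto
qed

lemma D_ev_component:
  assumes d: "d \<in> D_ev A" and i: "i \<in> {0, 1, 2}"
  shows "config A (component i (fst d))" "finite (component i (fst d))"
    "a \<in> component i (fst d) \<Longrightarrow> pol A a \<Longrightarrow> a \<in> component 0 (fst d)"
proof -
  obtain x y1 y2 \<chi> where b: "balanced A x y1 y2" and "choice A x y1 y2 \<chi>"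
    and d_eq: "d = (qset x y1 y2, qord A x y1 y2 \<chi>)" and "has_top d"
    by (rule D_evE[OF d])
  from i consider "i = 0" | "i = 1" | "i = 2" by blast
  then have "config A (component i (fst d)) \<and> finite (component i (fst d)) \<and>
      (a \<in> component i (fst d) \<longrightarrow> pol A a \<longrightarrow> a \<in> component 0 (fst d))"
    by cases (use b in \<open>simp_all add: d_eq balanced_def\<close>)
  then show "config A (component i (fst d))" "finite (component i (fst d))"
    "a \<in> component i (fst d) \<Longrightarrow> pol A a \<Longrightarrow> a \<in> component 0 (fst d)"
    by blast+
qed

lemma D_le_refl:
  assumes d: "d \<in> D_ev A"
  shows "D_le d d"
proof -
  obtain x y1 y2 \<chi> where "balanced A x y1 y2" "choice A x y1 y2 \<chi>"
    and d_eq: "d = (qset x y1 y2, qord A x y1 y2 \<chi>)" and "has_top d"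
    by (rule D_evE[OF d])
  then show ?thesis using qord_subset[of A x y1 y2 \<chi>] unfolding D_le_def d_eq by auto
qed

lemma delta_eq_perp_copy:
  assumes A: "is_game A" and d: "d \<in> D_ev A" and b: "(0, b) \<in> fst d" "snd (delta d) = b"
    and neg: "\<not> pol A b"
  shows "delta d = (0, b)"
proof -
  obtain x y1 y2 \<chi> where bal: "balanced A x y1 y2" and "choice A x y1 y2 \<chi>"
    and d_eq: "d = (qset x y1 y2, qord A x y1 y2 \<chi>)" and "has_top d"
    by (rule D_evE[OF d])
  have "((0, b), delta d) \<in> qord A x y1 y2 \<chi>" using D_ev_delta(2)[OF A d b(1)] d_eq by simp
  from qord_same_event[OF A balanced_subset_evs[OF bal] this] show ?thesis
    using b(2) neg by (auto simp: prod_eq_iff)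
qed

subsection \<open>Restriction below an element\<close>

lemma trancl_Int_down_closed:
  assumes closed: "\<And>u v. (u, v) \<in> R \<Longrightarrow> v \<in> S \<Longrightarrow> u \<in> S"
  shows "(R \<inter> S \<times> S)\<^sup>+ = R\<^sup>+ \<inter> S \<times> S"
proof
  show "(R \<inter> S \<times> S)\<^sup>+ \<subseteq> R\<^sup>+ \<inter> S \<times> S"
    using trancl_mono_subset[OF Int_lower1] trancl_subset_Sigma[OF Int_lower2] by blast
  show "R\<^sup>+ \<inter> S \<times> S \<subseteq> (R \<inter> S \<times> S)\<^sup>+"
  proof clarify
    fix a b assume "(a, b) \<in> R\<^sup>+" "b \<in> S"
    then show "(a, b) \<in> (R \<inter> S \<times> S)\<^sup>+"
    proof (induction rule: trancl_induct)
      case (base y)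
      then show ?case using closed by blast
    next
      case (step y z)
      then have "y \<in> S" using closed by blast
      with step show ?case by (blast intro: trancl_into_trancl)
    qed
  qed
qed

lemma qbase_components:
  assumes S: "S \<subseteq> qset x y1 y2"
  shows "qbase A (component 0 S) (component 1 S) (component 2 S) \<chi> = qbase A x y1 y2 \<chi> \<inter> S \<times> S"
  using S unfolding qbase_def qset_components[OF S] by (auto simp: component_def qset_def)

lemma qord_components:
  assumes S: "S \<subseteq> qset x y1 y2"
    and closed: "\<And>u v. (u, v) \<in> qbase A x y1 y2 \<chi> \<Longrightarrow> v \<in> S \<Longrightarrow> u \<in> S"
  shows "qord A (component 0 S) (component 1 S) (component 2 S) \<chi> = qord A x y1 y2 \<chi> \<inter> S \<times> S"
proof -
  have "Id_on S = Id_on (qset x y1 y2) \<inter> S \<times> S" using S by (auto simp: Id_on_def)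
  then show ?thesis
    unfolding qord_def qbase_components[OF S] qset_components[OF S]
    by (simp add: Int_Un_distrib2 trancl_Int_down_closed[OF closed])
qed

lemma config_component_restrict:
  assumes A: "is_game A" and S: "S \<subseteq> qset x y1 y2"
    and closed: "\<And>u v. (u, v) \<in> qbase A x y1 y2 \<chi> \<Longrightarrow> v \<in> S \<Longrightarrow> u \<in> S"
    and cfg: "config A (component i (qset x y1 y2))"
  shows "config A (component i S)"
proof (rule config_subset_down_closed[OF A cfg])
  show "component i S \<subseteq> component i (qset x y1 y2)" using S unfolding component_def by blast
  show "e' \<in> component i S"
    if e: "e \<in> component i S" and e': "e' \<in> component i (qset x y1 y2)" "leq A e' e" for e e'
  proof -
    have "(i, e') \<in> qset x y1 y2" "(i, e) \<in> qset x y1 y2"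
      using S e e'(1) unfolding component_def by auto
    then have "((i, e'), (i, e)) \<in> qbase A x y1 y2 \<chi>"
      using e'(2) unfolding qbase_def by simp
    then show ?thesis using closed e unfolding component_def by blast
  qed
qed

lemma choice_restrict:
  assumes ch: "choice A x y1 y2 \<chi>" and S: "S \<subseteq> qset x y1 y2"
    and closed: "\<And>u v. (u, v) \<in> qbase A x y1 y2 \<chi> \<Longrightarrow> v \<in> S \<Longrightarrow> u \<in> S"
  shows "choice A (component 0 S) (component 1 S) (component 2 S) \<chi>"
  unfolding choice_def
proof (intro ballI impI)
  fix a assume a: "a \<in> component 0 S" "\<not> pol A a"
  then have a0: "(0, a) \<in> qset x y1 y2" "a \<in> x" using S unfolding component_def qset_def by auto
  then have side: "\<chi> a = 1 \<and> a \<in> y1 \<or> \<chi> a = 2 \<and> a \<in> y2"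
    using ch a(2) unfolding choice_def by blast
  then have "(\<chi> a, a) \<in> qset x y1 y2" unfolding qset_def by auto
  then have "((\<chi> a, a), (0, a)) \<in> qbase A x y1 y2 \<chi>" using a0 a(2) unfolding qbase_def by auto
  then have "(\<chi> a, a) \<in> S" using closed a(1) unfolding component_def by blast
  then show "\<chi> a = 1 \<and> a \<in> component 1 S \<or> \<chi> a = 2 \<and> a \<in> component 2 S"
    using side unfolding component_def by auto
qed

lemma balanced_restrict:
  assumes A: "is_game A" and bal: "balanced A x y1 y2" and ch: "choice A x y1 y2 \<chi>"
    and S: "S \<subseteq> qset x y1 y2"
    and closed: "\<And>u v. (u, v) \<in> qbase A x y1 y2 \<chi> \<Longrightarrow> v \<in> S \<Longrightarrow> u \<in> S"
  shows "balanced A (component 0 S) (component 1 S) (component 2 S)"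
proof -
  have sub: "component 0 S \<subseteq> x" "component 1 S \<subseteq> y1" "component 2 S \<subseteq> y2"
    using S unfolding component_def qset_def by auto
  have cfg: "config A (component 0 S)" "config A (component 1 S)" "config A (component 2 S)"
    using config_component_restrict[OF A S closed, where i = 0]
      config_component_restrict[OF A S closed, where i = 1]
      config_component_restrict[OF A S closed, where i = 2] bal
    unfolding balanced_def by simp_all
  have pos: "a \<in> component 0 S" if "(i, a) \<in> S" "i \<in> {1, 2}" "pol A a" for a i
  proof -
    have "(i, a) \<in> qset x y1 y2" using that(1) S by blast
    moreover from this have "a \<in> x" using that(2,3) bal unfolding balanced_def qset_def by auto
    ultimately have "((0, a), (i, a)) \<in> qbase A x y1 y2 \<chi>"
      using that(2,3) unfolding qbase_def qset_def by auto
    then show ?thesis using closed that(1) unfolding component_def by blast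
  qed
  have "finite (component 0 S)" "finite (component 1 S)" "finite (component 2 S)"
    using finite_subset[OF sub(1)] finite_subset[OF sub(2)] finite_subset[OF sub(3)] bal
    unfolding balanced_def by auto
  moreover have "\<forall>a\<in>component 1 S \<union> component 2 S. pol A a \<longrightarrow> a \<in> component 0 S"
    using pos[of 1] pos[of 2] unfolding component_def by auto
  moreover have "choice A (component 0 S) (component 1 S) (component 2 S) \<chi>"
    by (rule choice_restrict[OF ch S]) (use closed in blast)
  then have "\<forall>a\<in>component 0 S. \<not> pol A a \<longrightarrow> a \<in> component 1 S \<or> a \<in> component 2 S"
    unfolding choice_def by blast
  ultimately show ?thesis using cfg unfolding balanced_def by blast
qed

lemma D_ev_restrict:
  assumes A: "is_game A" and d: "d \<in> D_ev A" and t: "t \<in> fst d"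
  obtains d' where "d' \<in> D_ev A" "D_le d' d" "delta d' = t"
proof -
  obtain x y1 y2 \<chi> where bal: "balanced A x y1 y2" and ch: "choice A x y1 y2 \<chi>"
    and d_eq: "d = (qset x y1 y2, qord A x y1 y2 \<chi>)" and "has_top d"
    by (rule D_evE[OF d])
  define S where "S = {s \<in> qset x y1 y2. (s, t) \<in> qord A x y1 y2 \<chi>}"
  have S: "S \<subseteq> qset x y1 y2" unfolding S_def by blast
  have down: "u \<in> S" if "(u, v) \<in> qord A x y1 y2 \<chi>" "v \<in> S" for u v
    using that qord_subset[of A x y1 y2 \<chi>] qord_trans[of u v A x y1 y2 \<chi> t] unfolding S_def by blast
  have closed: "\<And>u v. (u, v) \<in> qbase A x y1 y2 \<chi> \<Longrightarrow> v \<in> S \<Longrightarrow> u \<in> S"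
    using down qbase_in_qord by blast
  have tS: "t \<in> S" using t qord_refl[of t x y1 y2 A \<chi>] unfolding S_def d_eq by simp
  let ?x = "component 0 S" and ?y1 = "component 1 S" and ?y2 = "component 2 S"
  have top: "t \<in> qset ?x ?y1 ?y2" "\<forall>s\<in>qset ?x ?y1 ?y2. (s, t) \<in> qord A ?x ?y1 ?y2 \<chi>"
    using tS qset_components[OF S] qord_components[OF S closed] unfolding S_def by auto
  have bal': "balanced A ?x ?y1 ?y2" by (rule balanced_restrict[OF A bal ch S]) (use closed in blast)
  have "choice A ?x ?y1 ?y2 \<chi>" by (rule choice_restrict[OF ch S]) (use closed in blast)
  then have "(qset ?x ?y1 ?y2, qord A ?x ?y1 ?y2 \<chi>) \<in> D_ev A" using D_evI[OF bal' _ top] by blast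
  moreover have "D_le (qset ?x ?y1 ?y2, qord A ?x ?y1 ?y2 \<chi>) d"
  proof -
    have "(qset ?x ?y1 ?y2, qord A ?x ?y1 ?y2 \<chi>) = (S, qord A x y1 y2 \<chi> \<inter> S \<times> S)"
      using qset_components[OF S] qord_components[OF S closed] by simp
    then show ?thesis unfolding D_le_def d_eq using S down by auto
  qed
  moreover have "delta (qset ?x ?y1 ?y2, qord A ?x ?y1 ?y2 \<chi>) = t"
    using delta_qord_top[OF A balanced_subset_evs[OF bal'] top] .
  ultimately show thesis using that by blast
qed

lemma par_conI:
  assumes fin: "finite Z" and Z: "Z \<subseteq> par_evs A"
    and cover: "\<And>i. i \<in> {0, 1, 2} \<Longrightarrow> \<exists>c. config A c \<and> component i Z \<subseteq> c"
  shows "par_con A Z"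
  unfolding par_con_def
proof (intro conjI ballI fin Z)
  fix i :: nat assume i: "i \<in> {0, 1, 2}"
  obtain c where c: "config A c" "component i Z \<subseteq> c" using cover[OF i] by blast
  have "component i Z \<subseteq> snd ` Z" unfolding component_def by force
  then have "finite (component i Z)" using fin finite_subset by blast
  then show "{a. (i, a) \<in> Z} \<in> con A"
    using config_finite_subset_con[OF c] unfolding component_def by blast
qed

lemma D_down_self: "d \<in> D_ev A \<Longrightarrow> d \<in> X \<Longrightarrow> d \<in> D_down A X"
  unfolding D_down_def using D_le_refl[of d A] by blast

lemma D_down_subset: "d \<in> D_down A X \<Longrightarrow> \<exists>d'\<in>X. fst d \<subseteq> fst d'"
  unfolding D_down_def D_le_def by blast

lemma delta_D_down_subset:
  assumes A: "is_game A" and d: "d \<in> D_down A X"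
  shows "\<exists>d'\<in>X. delta d \<in> fst d'"
proof -
  have "delta d \<in> fst d" using D_ev_delta(1)[OF A] d unfolding D_down_def by blast
  then show ?thesis using D_down_subset[OF d] by blast
qed

lemma finite_D_down:
  assumes fin: "finite X" and X: "X \<subseteq> D_ev A"
  shows "finite (D_down A X)"
proof -
  let ?restr = "\<lambda>(S, d'). (S, snd d' \<inter> S \<times> S)"
  have "finite (\<Union>d\<in>X. fst d)" using fin X D_ev_events(1) by blast
  then have "finite (?restr ` (Pow (\<Union>d\<in>X. fst d) \<times> X))" using fin by simp
  moreover have "D_down A X \<subseteq> ?restr ` (Pow (\<Union>d\<in>X. fst d) \<times> X)"
  proof
    fix d assume "d \<in> D_down A X"
    then obtain d' where d': "d' \<in> X" "fst d \<subseteq> fst d'" "snd d = snd d' \<inter> fst d \<times> fst d"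
      unfolding D_down_def D_le_def by blast
    then have "d = ?restr (fst d, d')" by (simp add: prod_eq_iff)
    moreover have "(fst d, d') \<in> Pow (\<Union>d\<in>X. fst d) \<times> X" using d' by blast
    ultimately show "d \<in> ?restr ` (Pow (\<Union>d\<in>X. fst d) \<times> X)" by blast
  qed
  ultimately show ?thesis by (rule finite_subset[rotated])
qed

lemma delta_D_down_par_evs:
  assumes A: "is_game A" and fin: "finite X" and X: "X \<subseteq> D_ev A"
  shows "finite (delta ` D_down A X)" "delta ` D_down A X \<subseteq> par_evs A"
proof -
  show "finite (delta ` D_down A X)" using finite_D_down[OF fin X] by simp
  show "delta ` D_down A X \<subseteq> par_evs A"
    using delta_D_down_subset[OF A] X D_ev_events(2) unfolding par_evs_def by blast
qed

subsection \<open>No negative conflict implies determinism\<close>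

lemma down_closure_superset:
  assumes A: "is_game A" and "P \<subseteq> evs A"
  shows "P \<subseteq> down_closure A P"
  using assms(2) game_leq_refl[OF A] unfolding down_closure_def by blast

lemma pos_perp_event_in_neg_part:
  assumes A: "is_game A" and X: "X \<subseteq> D_ev A" and d: "d \<in> X" "(0, a) \<in> fst d"
    and pos: "pol A a"
  shows "(0, a) \<in> delta ` D_down A {d \<in> D_down A X. \<not> D_pol A d}"
proof -
  obtain d' where d': "d' \<in> D_ev A" "D_le d' d" "delta d' = (0, a)"
    by (rule D_ev_restrict[OF A subsetD[OF X d(1)] d(2)])
  have "d' \<in> {d \<in> D_down A X. \<not> D_pol A d}"
    unfolding D_down_def D_pol_def par_pol_def using d' d(1) pos by auto
  from D_down_self[OF d'(1) this] show ?thesis unfolding d'(3)[symmetric] by (rule imageI)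
qed

lemma config_Un_D_ev_components:
  assumes A: "is_game A" and rf: "race_free A" and nc: "no_neg_conflict A"
    and fin: "finite X" and X: "X \<subseteq> D_ev A" and p: "config A p" "finite p"
    and pos: "\<And>d a. d \<in> X \<Longrightarrow> a \<in> component 0 (fst d) \<Longrightarrow> pol A a \<Longrightarrow> a \<in> p"
  shows "config A (p \<union> (\<Union>d\<in>X. \<Union>i\<in>{0, 1, 2}. component i (fst d)))"
proof -
  define F where "F = (\<lambda>(d, i). component i (fst d)) ` (X \<times> {0, 1, 2})"
  have "finite F" using fin unfolding F_def by simp
  moreover have "\<forall>y\<in>F. finite y \<and> config A y"
  proof
    fix y assume "y \<in> F"
    then obtain d i where "d \<in> X" "i \<in> {0, 1, 2}" "y = component i (fst d)"
      unfolding F_def by blast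
    then show "finite y \<and> config A y" using D_ev_component(1,2)[of d A i] X by blast
  qed
  moreover have "\<forall>y\<in>F. \<forall>a\<in>y. pol A a \<longrightarrow> a \<in> p"
  proof (intro ballI impI)
    fix y a assume "y \<in> F" "a \<in> y" "pol A a"
    then obtain d i where d: "d \<in> X" "i \<in> {0, 1, 2}" "a \<in> component i (fst d)"
      unfolding F_def by blast
    then have "a \<in> component 0 (fst d)" using D_ev_component(3)[of d A i a] X \<open>pol A a\<close> by blast
    then show "a \<in> p" using pos[OF d(1)] \<open>pol A a\<close> by blast
  qed
  ultimately have "config A (p \<union> \<Union>F)" by (rule config_Un_family_neg[OF A rf nc _ _ p(2,1)])
  moreover have "\<Union>F = (\<Union>d\<in>X. \<Union>i\<in>{0, 1, 2}. component i (fst d))" unfolding F_def by auto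
  ultimately show ?thesis by simp
qed

lemma D_deterministic_if_no_neg_conflict:
  assumes A: "is_game A" and rf: "race_free A" and nc: "no_neg_conflict A"
  shows "D_deterministic A"
  unfolding D_deterministic_def
proof (intro allI impI, elim conjE)
  fix X assume fin: "finite X" and X: "X \<subseteq> D_ev A"
  define Y where "Y = {d \<in> D_down A X. \<not> D_pol A d}"
  assume "D_con A {d \<in> D_down A X. \<not> D_pol A d}"
  then have Y: "par_con A (delta ` D_down A Y)" unfolding D_con_def Y_def by blast
  define P where "P = {a. \<exists>d\<in>X. a \<in> component 0 (fst d) \<and> pol A a}"
  have "P \<subseteq> component 0 (delta ` D_down A Y)"
    using pos_perp_event_in_neg_part[OF A X] unfolding P_def Y_def component_def by blast
  moreover have "component 0 (delta ` D_down A Y) \<in> con A"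
    using Y unfolding par_con_def component_def by simp
  ultimately have P_con: "P \<in> con A" by (rule game_con_subset[OF A, rotated])
  define p where "p = down_closure A P"
  have p: "config A p" "finite p" "P \<subseteq> p"
    using config_down_closure[OF A P_con] game_con_finite[OF A down_closure_con[OF A P_con]]
      down_closure_superset[OF A] game_con_finite[OF A P_con]
    unfolding p_def by auto
  have C: "config A (p \<union> (\<Union>d\<in>X. \<Union>i\<in>{0, 1, 2}. component i (fst d)))"
    by (rule config_Un_D_ev_components[OF A rf nc fin X p(1,2)]) (use p(3) in \<open>auto simp: P_def\<close>)
  have "component i (delta ` D_down A X) \<subseteq> p \<union> (\<Union>d\<in>X. \<Union>i\<in>{0, 1, 2}. component i (fst d))"
    if "i \<in> {0, 1, 2}" for i
  proof
    fix a assume "a \<in> component i (delta ` D_down A X)"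
    then obtain d where "d \<in> D_down A X" "delta d = (i, a)" unfolding component_def by force
    then obtain d' where "d' \<in> X" "(i, a) \<in> fst d'" using delta_D_down_subset[OF A] by metis
    then show "a \<in> p \<union> (\<Union>d\<in>X. \<Union>i\<in>{0, 1, 2}. component i (fst d))"
      using that unfolding component_def by blast
  qed
  then have "par_con A (delta ` D_down A X)"
    using par_conI[OF delta_D_down_par_evs[OF A fin X]] C by blast
  then show "D_con A X" unfolding D_con_def using fin X by blast
qed

subsection \<open>Determinism implies no negative conflict\<close>

definition neg_cone :: "'a game \<Rightarrow> 'a \<Rightarrow> 'a set" where
  "neg_cone A e = down_closure A {b. leq A b e \<and> \<not> pol A b}"

definition prime_dup :: "'a game \<Rightarrow> nat \<Rightarrow> 'a \<Rightarrow> 'a dev" where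
  "prime_dup A i e =
    (qset (down_closure A {e})
       (if i = 1 then neg_cone A e else {}) (if i = 2 then neg_cone A e else {}),
     qord A (down_closure A {e})
       (if i = 1 then neg_cone A e else {}) (if i = 2 then neg_cone A e else {}) (\<lambda>_. i))"

lemma neg_cone_subset:
  assumes A: "is_game A"
  shows "neg_cone A e \<subseteq> down_closure A {e}"
  using game_leq_trans[OF A] unfolding neg_cone_def down_closure_def by blast

lemma down_closure_singleton:
  assumes A: "is_game A" and e: "e \<in> evs A"
  shows "down_closure A {e} \<in> con A" "config A (down_closure A {e})" "finite (down_closure A {e})"
proof -
  have "{e} \<in> con A" using game_con_singleton[OF A e] .
  then show "down_closure A {e} \<in> con A" "config A (down_closure A {e})" "finite (down_closure A {e})"
    using down_closure_con[OF A] config_down_closure[OF A] game_con_finite[OF A] by blast+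
qed

lemma neg_cone_config:
  assumes A: "is_game A" and e: "e \<in> evs A"
  shows "config A (neg_cone A e)" "finite (neg_cone A e)"
proof -
  have "{b. leq A b e \<and> \<not> pol A b} \<in> con A"
    by (rule game_con_subset[OF A down_closure_singleton(1)[OF A e]]) (auto simp: down_closure_def)
  then show "config A (neg_cone A e)" unfolding neg_cone_def by (rule config_down_closure[OF A])
  show "finite (neg_cone A e)"
    using finite_subset[OF neg_cone_subset[OF A] down_closure_singleton(3)[OF A e]] .
qed

lemma neg_cone_memI:
  assumes A: "is_game A" and "b \<in> down_closure A {e}" "\<not> pol A b"
  shows "b \<in> neg_cone A e"
  using assms(2,3) game_leq_refl[OF A] game_leq_in_evs[OF A]
  unfolding neg_cone_def down_closure_def by blast

lemma prime_dup_D_ev: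
  assumes A: "is_game A" and e: "e \<in> evs A" and i: "i \<in> {1, 2}"
  shows "prime_dup A i e \<in> D_ev A" "delta (prime_dup A i e) = (0, e)"
proof -
  define x where "x = down_closure A {e}"
  define y where "y = neg_cone A e"
  define y1 where "y1 = (if i = 1 then y else {})"
  define y2 where "y2 = (if i = 2 then y else {})"
  have d_eq: "prime_dup A i e = (qset x y1 y2, qord A x y1 y2 (\<lambda>_. i))"
    unfolding prime_dup_def x_def y_def y1_def y2_def ..
  have cfg_x: "config A x" "finite x" unfolding x_def using down_closure_singleton[OF A e] by auto
  have cfg_y: "config A y" "finite y" unfolding y_def using neg_cone_config[OF A e] by auto
  have yx: "y \<subseteq> x" unfolding x_def y_def by (rule neg_cone_subset[OF A])
  have neg_in_y: "b \<in> y" if "b \<in> x" "\<not> pol A b" for b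
    using neg_cone_memI[OF A] that unfolding x_def y_def by blast
  have Q0: "(0, f) \<in> qset x y1 y2 \<longleftrightarrow> f \<in> x" for f
    unfolding qset_def by auto
  have Qi: "(i, f) \<in> qset x y1 y2 \<longleftrightarrow> f \<in> y" for f
    using i unfolding qset_def y1_def y2_def by auto
  have Q: "s = (0, snd s) \<or> s = (i, snd s)" if "s \<in> qset x y1 y2" for s
    using that i unfolding qset_def y1_def y2_def by (auto split: if_splits)
  have bal: "balanced A x y1 y2"
    unfolding balanced_def y1_def y2_def using cfg_x cfg_y config_empty[OF A] yx neg_in_y i by auto
  have ch: "choice A x y1 y2 (\<lambda>_. i)"
    unfolding choice_def y1_def y2_def using neg_in_y i by auto
  have e_top: "(0, e) \<in> qset x y1 y2"
    using Q0[of e] game_leq_refl[OF A e] unfolding x_def down_closure_def by blast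
  have below_e: "((0, f), (0, e)) \<in> qord A x y1 y2 (\<lambda>_. i)" if "f \<in> x" for f
    using that Q0[of f] e_top unfolding x_def down_closure_def
    by (intro qbase_in_qord) (simp add: qbase_def)
  have "(s, (0, e)) \<in> qord A x y1 y2 (\<lambda>_. i)" if s: "s \<in> qset x y1 y2" for s
    using Q[OF s]
  proof
    assume "s = (0, snd s)"
    then show ?thesis using s below_e Q0[of "snd s"] by metis
  next
    assume s_eq: "s = (i, snd s)"
    then have "snd s \<in> y" using s Qi by metis
    then obtain b where b: "leq A b e" "\<not> pol A b" "leq A (snd s) b"
      unfolding y_def neg_cone_def down_closure_def by blast
    have bx: "b \<in> x" using b(1) unfolding x_def down_closure_def by blast
    have by_: "b \<in> y" using neg_in_y[OF bx b(2)] .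
    have "((i, snd s), (i, b)) \<in> qbase A x y1 y2 (\<lambda>_. i)"
      using Qi[of "snd s"] Qi[of b] \<open>snd s \<in> y\<close> by_ b(3) unfolding qbase_def by simp
    moreover have "((i, b), (0, b)) \<in> qbase A x y1 y2 (\<lambda>_. i)"
      using Q0[of b] Qi[of b] bx by_ b(2) unfolding qbase_def by auto
    ultimately show ?thesis using below_e[OF bx] qbase_in_qord qord_trans s_eq by metis
  qed
  then have top: "\<forall>s\<in>qset x y1 y2. (s, (0, e)) \<in> qord A x y1 y2 (\<lambda>_. i)" by blast
  show "prime_dup A i e \<in> D_ev A" unfolding d_eq by (rule D_evI[OF bal ch e_top top])
  show "delta (prime_dup A i e) = (0, e)"
    unfolding d_eq by (rule delta_qord_top[OF A balanced_subset_evs[OF bal] e_top top])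
qed

lemma prime_dup_events:
  assumes A: "is_game A" and c: "config A c" "e \<in> c" and s: "s \<in> fst (prime_dup A i e)"
  shows "snd s \<in> c" "fst s = 0 \<or> fst s = i"
proof -
  have x: "down_closure A {e} \<subseteq> c" using down_closure_subset[OF A c(1)] c(2) by blast
  have "s \<in> qset (down_closure A {e}) (if i = 1 then neg_cone A e else {})
      (if i = 2 then neg_cone A e else {})"
    using s unfolding prime_dup_def by simp
  then have "snd s \<in> down_closure A {e} \<union> neg_cone A e \<and> (fst s = 0 \<or> fst s = i)"
    unfolding qset_def by (cases "i = 1"; cases "i = 2") auto
  then show "snd s \<in> c" "fst s = 0 \<or> fst s = i" using x neg_cone_subset[OF A, of e] by auto
qed

text \<open>If (0, a') occurred in d, the top of d would lie over a' as well, hence be the positive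
  event (0, a').\<close>

lemma D_ev_neg_perp_component_subset:
  assumes A: "is_game A" and z: "config A z" and neg: "\<not> pol A a'"
    and d: "d \<in> D_ev A" "\<not> D_pol A d" and evs: "snd ` fst d \<subseteq> insert a' z"
  shows "component 0 (fst d) \<subseteq> z"
proof
  fix b assume "b \<in> component 0 (fst d)"
  then have b: "(0, b) \<in> fst d" unfolding component_def by simp
  have t: "delta d \<in> fst d" "((0, b), delta d) \<in> snd d" using D_ev_delta[OF A d(1)] b by auto
  have leq: "leq A b (snd (delta d))" using D_ev_leq[OF A d(1) t(2)] by simp
  show "b \<in> z"
  proof (rule ccontr)
    assume "b \<notin> z"
    then have "snd (delta d) \<notin> z" using leq config_down_closed[OF A z] by blast
    then have "snd (delta d) = a'" "b = a'" using evs t(1) b \<open>b \<notin> z\<close> by force+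
    then have "delta d = (0, b)" using delta_eq_perp_copy[OF A d(1) b] neg by simp
    then show False using d(2) neg \<open>b = a'\<close> unfolding D_pol_def par_pol_def by simp
  qed
qed

lemma prime_dups_neg_part_event:
  assumes A: "is_game A" and z: "config A z"
    and a: "\<And>j. j \<in> {1, 2} \<Longrightarrow> config A (insert (a j) z) \<and> \<not> pol A (a j)"
    and X: "\<And>d. d \<in> X \<Longrightarrow> \<exists>j e. j \<in> {1, 2} \<and> e \<in> insert (a j) z \<and> d = prime_dup A j e"
    and d: "d \<in> D_down A X" "\<not> D_pol A d" and b: "(i, b) \<in> fst d"
  shows "b \<in> (if i = 0 then z else insert (a i) z)"
proof -
  obtain d' where d': "d' \<in> X" "fst d \<subseteq> fst d'" using D_down_subset[OF d(1)] by blast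
  obtain j e where j: "j \<in> {1, 2}" "e \<in> insert (a j) z" "d' = prime_dup A j e"
    using X[OF d'(1)] by blast
  have events: "snd s \<in> insert (a j) z" "fst s = 0 \<or> fst s = j" if "s \<in> fst d" for s
    using prime_dup_events[OF A conjunct1[OF a[OF j(1)]] j(2)] d'(2) j(3) that by blast+
  show ?thesis
  proof (cases "i = 0")
    case True
    have "d \<in> D_ev A" using d(1) unfolding D_down_def by blast
    moreover have "snd ` fst d \<subseteq> insert (a j) z" using events(1) by blast
    ultimately have "component 0 (fst d) \<subseteq> z"
      using D_ev_neg_perp_component_subset[OF A z conjunct2[OF a[OF j(1)]] _ d(2)] by blast
    then show ?thesis using True b unfolding component_def by auto
  next
    case False
    then show ?thesis using events[OF b] by auto
  qed
qed

lemma D_con_neg_part_prime_dups: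
  assumes A: "is_game A" and z: "config A z"
    and a: "\<And>j. j \<in> {1, 2} \<Longrightarrow> config A (insert (a j) z) \<and> \<not> pol A (a j)"
    and fin: "finite X"
    and X: "\<And>d. d \<in> X \<Longrightarrow> \<exists>j e. j \<in> {1, 2} \<and> e \<in> insert (a j) z \<and> d = prime_dup A j e"
  shows "D_con A {d \<in> D_down A X. \<not> D_pol A d}"
proof -
  define Y where "Y = {d \<in> D_down A X. \<not> D_pol A d}"
  have "X \<subseteq> D_ev A"
  proof
    fix d assume "d \<in> X"
    then obtain j e where j: "j \<in> {1, 2}" "e \<in> insert (a j) z" "d = prime_dup A j e"
      using X by blast
    then have "e \<in> evs A" using config_subset_evs[OF conjunct1[OF a[OF j(1)]]] by blast
    then show "d \<in> D_ev A" using prime_dup_D_ev(1)[OF A _ j(1)] j(3) by simp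
  qed
  then have "finite (D_down A X)" by (rule finite_D_down[OF fin])
  moreover have "Y \<subseteq> D_down A X" "D_down A X \<subseteq> D_ev A" unfolding Y_def D_down_def by auto
  ultimately have Y: "finite Y" "Y \<subseteq> D_ev A" by (auto intro: finite_subset)
  have "component i (delta ` D_down A Y) \<subseteq> (if i = 0 then z else insert (a i) z)" for i
  proof
    fix b assume "b \<in> component i (delta ` D_down A Y)"
    then obtain d0 where "d0 \<in> D_down A Y" "(i, b) = delta d0" unfolding component_def by blast
    then obtain d where d: "d \<in> Y" "(i, b) \<in> fst d" using delta_D_down_subset[OF A] by metis
    then show "b \<in> (if i = 0 then z else insert (a i) z)"
      using prime_dups_neg_part_event[OF A z a X] unfolding Y_def by blast
  qed
  moreover have "config A (if i = 0 then z else insert (a i) z)" if "i \<in> {0, 1, 2}" for i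
    using that z conjunct1[OF a] by auto
  ultimately have "par_con A (delta ` D_down A Y)"
    by (intro par_conI[OF delta_D_down_par_evs[OF A Y]]) blast
  then show ?thesis using Y unfolding D_con_def Y_def by blast
qed

lemma no_neg_conflict_if_D_deterministic:
  assumes A: "is_game A" and det: "D_deterministic A"
  shows "no_neg_conflict A"
  unfolding no_neg_conflict_def
proof (intro allI impI, elim conjE)
  fix z a1 a2
  assume z: "config A z" and "a1 \<notin> z" "a2 \<notin> z" and neg1: "\<not> pol A a1"
    and neg2: "\<not> pol A a2" and c1: "config A (insert a1 z)" and c2: "config A (insert a2 z)"
  define a where "a j = (if j = 1 then a1 else a2)" for j :: nat
  define c where "c j = insert (a j) z" for j
  have c_cfg: "config A (c j)" "\<not> pol A (a j)" if "j \<in> {1, 2}" for j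
    using that c1 c2 neg1 neg2 unfolding c_def a_def by auto
  show "config A (insert a1 (insert a2 z))"
  proof (rule ccontr)
    assume "\<not> config A (insert a1 (insert a2 z))"
    moreover have "insert a1 (insert a2 z) = c 1 \<union> c 2" unfolding c_def a_def by auto
    moreover have "config A (c 1)" "config A (c 2)" using c_cfg(1) by auto
    ultimately obtain W where W: "W \<subseteq> c 1 \<union> c 2" "finite W" "W \<notin> con A"
      using config_Un_iff_con[OF A] by metis
    define side where "side e = (if e \<in> c 1 then 1 else 2 :: nat)" for e
    have side: "side e \<in> {1, 2}" "e \<in> c (side e)" if "e \<in> W" for e
      using that W(1) unfolding side_def by auto
    have W_evs: "e \<in> evs A" if "e \<in> W" for e
      using side(2)[OF that] config_subset_evs[OF c_cfg(1)[OF side(1)[OF that]]] by blast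
    define X where "X = (\<lambda>e. prime_dup A (side e) e) ` W"
    have X: "finite X" "X \<subseteq> D_ev A"
      using W(2) prime_dup_D_ev(1)[OF A W_evs side(1)] unfolding X_def by blast+
    define Y where "Y = {d \<in> D_down A X. \<not> D_pol A d}"
    have "D_con A Y"
      unfolding Y_def
    proof (rule D_con_neg_part_prime_dups[OF A z _ X(1)])
      show "config A (insert (a j) z) \<and> \<not> pol A (a j)" if "j \<in> {1, 2}" for j
        using c_cfg[OF that] unfolding c_def by blast
      show "\<exists>j e. j \<in> {1, 2} \<and> e \<in> insert (a j) z \<and> d = prime_dup A j e" if "d \<in> X" for d
        using that side unfolding X_def c_def by blast
    qed
    then have "D_con A X" using det X unfolding D_deterministic_def Y_def by blast
    then have "component 0 (delta ` D_down A X) \<in> con A"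
      unfolding D_con_def par_con_def component_def by simp
    moreover have "W \<subseteq> component 0 (delta ` D_down A X)"
    proof
      fix e assume e: "e \<in> W"
      have "prime_dup A (side e) e \<in> X" using e unfolding X_def by blast
      then have "prime_dup A (side e) e \<in> D_down A X"
        by (rule D_down_self[OF prime_dup_D_ev(1)[OF A W_evs[OF e] side(1)[OF e]]])
      then show "e \<in> component 0 (delta ` D_down A X)"
        using prime_dup_D_ev(2)[OF A W_evs[OF e] side(1)[OF e]] unfolding component_def by force
    qed
    ultimately show False using W(3) game_con_subset[OF A] by metis
  qed
qed

theorem mainTheorem16:
  fixes A :: "'a game"
  assumes "is_game A" and "race_free A"
  shows "D_deterministic A \<longleftrightarrow> no_neg_conflict A"
  using D_deterministic_if_no_neg_conflict[OF assms] no_neg_conflict_if_D_deterministic[OF assms(1)]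
  by blast

end
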